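(* For every $n\ge 3$, the sensitivity to synchronism of elementary cellular automaton rule $162$ satisfies $\mu(f_{162,n})=\dfrac{3^n-2^{n+1}-n+2}{3^n-2^{n+1}+2}$.
   Context: Cells are indexed by $\mathbb{Z}_n=\{0,\dots,n-1\}$, indices modulo $n$. Rule $162$ has local rule $r_{162}(x_1,x_2,x_3)=(x_1\vee\neg x_2)\wedge x_3$ and global function $f_{162,n}(x)_i=r_{162}(x_{i-1},x_i,x_{i+1})$. An update schedule is an ordered partition $\Delta=(\Delta_1,\dots,\Delta_k)$ of $\mathbb{Z}_n$ into nonempty blocks; $\mathcal{P}_n$ is the set of them. For a block $B$ let $f^{(B)}(x)_i=f_{162,n}(x)_i$ if $i\in B$ and $x_i$ otherwise; $f^{(\Delta)}_{162,n}=f^{(\Delta_k)}\circ\cdots\circ f^{(\Delta_1)}$. The dynamics of $\Delta$ is the transition digraph with arcs $(x,f^{(\Delta)}_{162,n}(x))$; $\mathcal{D}(f_{162,n})$ is the set of distinct dynamics over $\Delta\in\mathcal{P}_n$. The sensitivity to synchronism is $\mu(f_{162,n})=|\mathcal{D}(f_{162,n})|/(3^n-2^{n+1}+2)$. *)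

theory Defs
  imports Complex_Main
begin

definition r162 :: "bool \<Rightarrow> bool \<Rightarrow> bool \<Rightarrow> bool" where
  "r162 x1 x2 x3 = ((x1 \<or> \<not> x2) \<and> x3)"

text \<open>Configurations of size n: functions on nat, with cells {0..<n}; values outside are False.\<close>
definition configs :: "nat \<Rightarrow> (nat \<Rightarrow> bool) set" where
  "configs n = {x. \<forall>i\<ge>n. \<not> x i}"

definition f162 :: "nat \<Rightarrow> (nat \<Rightarrow> bool) \<Rightarrow> (nat \<Rightarrow> bool)" where
  "f162 n x = (\<lambda>i. if i < n then r162 (x ((i + n - 1) mod n)) (x i) (x ((i + 1) mod n)) else False)"

definition block_update :: "nat \<Rightarrow> nat set \<Rightarrow> (nat \<Rightarrow> bool) \<Rightarrow> (nat \<Rightarrow> bool)" where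
  "block_update n B x = (\<lambda>i. if i \<in> B then f162 n x i else x i)"

definition schedules :: "nat \<Rightarrow> nat set list set" where
  "schedules n = {\<Delta>. (\<forall>B\<in>set \<Delta>. B \<noteq> {}) \<and>
      (\<forall>i j. i < j \<and> j < length \<Delta> \<longrightarrow> \<Delta> ! i \<inter> \<Delta> ! j = {}) \<and>
      \<Union> (set \<Delta>) = {0..<n}}"

text \<open>f^(Delta) = f^(Delta_k) o ... o f^(Delta_1): Delta_1 is applied first.\<close>
definition sched_update :: "nat \<Rightarrow> nat set list \<Rightarrow> (nat \<Rightarrow> bool) \<Rightarrow> (nat \<Rightarrow> bool)" where
  "sched_update n \<Delta> x = foldl (\<lambda>y B. block_update n B y) x \<Delta>"

text \<open>Dynamics: the transition digraph, as its set of arcs over the configuration space.\<close>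
definition dynamics :: "nat \<Rightarrow> nat set list \<Rightarrow> ((nat \<Rightarrow> bool) \<times> (nat \<Rightarrow> bool)) set" where
  "dynamics n \<Delta> = {(x, sched_update n \<Delta> x) | x. x \<in> configs n}"

definition all_dynamics :: "nat \<Rightarrow> ((nat \<Rightarrow> bool) \<times> (nat \<Rightarrow> bool)) set set" where
  "all_dynamics n = dynamics n ` schedules n"

definition sensitivity :: "nat \<Rightarrow> real" where
  "sensitivity n = real (card (all_dynamics n)) / (3 ^ n - 2 ^ (n + 1) + 2)"

end

theory Submission
  imports Defs "HOL-Library.Comparator"
begin

text \<open>
  The effect of a schedule depends only on its update labelling: for every edge \<open>{i, i+1}\<close> of
  the cycle, whether cell \<open>i\<close> is updated before, together with, or after cell \<open>i+1\<close>. Given the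
  labelling, the new configuration is the unique solution of one equation per cell, solved block by
  block. A word in \<open>{<, =, >}\<^sup>n\<close> is such a labelling iff it contains \<open><\<close> exactly when it contains
  \<open>>\<close>: update times cannot increase strictly all around the cycle, and conversely a balanced word is
  realised by the level sets of a suitably weighted prefix sum. There are \<open>3\<^sup>n - 2\<^sup>n\<^sup>+\<^sup>1 + 2\<close>
  balanced words.

  Distinct balanced words give distinct dynamics, as a configuration with a single 0 shows, with
  exactly \<open>n\<close> exceptions: cell \<open>i-1\<close> is updated before cell \<open>i\<close>, the update times decrease strictly
  from cell \<open>i+1\<close> around the cycle to cell \<open>i-1\<close>, and the edge \<open>{i, i+1}\<close> is labelled \<open><\<close> or \<open>=\<close>.
  A 1 entering cell \<open>i+1\<close> from the right then runs down to cell \<open>i-1\<close>, after which it does not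
  matter whether cell \<open>i+1\<close> reads the old or the new value of cell \<open>i\<close>.
\<close>

section \<open>Cyclic indices\<close>

definition cyc_succ :: "nat \<Rightarrow> nat \<Rightarrow> nat" where
  "cyc_succ n i = (i + 1) mod n"

definition cyc_pred :: "nat \<Rightarrow> nat \<Rightarrow> nat" where
  "cyc_pred n i = (i + n - 1) mod n"

lemma cyc_succ_lt: "0 < n \<Longrightarrow> cyc_succ n i < n"
  by (simp add: cyc_succ_def)

lemma cyc_pred_lt: "0 < n \<Longrightarrow> cyc_pred n i < n"
  by (simp add: cyc_pred_def)

lemma cyc_succ_eq: "i < n \<Longrightarrow> cyc_succ n i = (if i = n - 1 then 0 else Suc i)"
  by (auto simp: cyc_succ_def)

lemma cyc_pred_eq: "i < n \<Longrightarrow> cyc_pred n i = (if i = 0 then n - 1 else i - 1)"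
  by (auto simp: cyc_pred_def mod_if)

lemma cyc_succ_pred [simp]: "i < n \<Longrightarrow> cyc_succ n (cyc_pred n i) = i"
  by (auto simp: cyc_succ_eq cyc_pred_eq)

lemma cyc_pred_succ [simp]: "i < n \<Longrightarrow> cyc_pred n (cyc_succ n i) = i"
  by (auto simp: cyc_succ_eq cyc_pred_eq)

lemma cyc_succ_neq: "2 \<le> n \<Longrightarrow> i < n \<Longrightarrow> cyc_succ n i \<noteq> i"
  by (auto simp: cyc_succ_eq)

lemma cyc_pred_neq: "2 \<le> n \<Longrightarrow> i < n \<Longrightarrow> cyc_pred n i \<noteq> i"
  by (auto simp: cyc_pred_eq)

lemma cyc_succ_neq_pred: "3 \<le> n \<Longrightarrow> i < n \<Longrightarrow> cyc_succ n i \<noteq> cyc_pred n i"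
  by (auto simp: cyc_succ_eq cyc_pred_eq)

lemma cyc_succ_mod: "cyc_succ n (a mod n) = Suc a mod n"
  by (simp add: cyc_succ_def mod_Suc_eq)

lemma cyc_offset_pred: "i < n \<Longrightarrow> (i + (n - 1)) mod n = cyc_pred n i"
  by (simp add: cyc_pred_def)

lemma cyc_offset_eq_iff:
  fixes i k k' n :: nat
  assumes "k < n" "k' < n"
  shows "(i + k) mod n = (i + k') mod n \<longleftrightarrow> k = k'"
proof
  assume "(i + k) mod n = (i + k') mod n"
  then have "int n dvd int k - int k'"
    by (metis add_diff_cancel_left mod_eq_dvd_iff of_nat_add zmod_int)
  then show "k = k'"
    by (metis assms mod_eq_dvd_iff mod_less of_nat_eq_iff of_nat_mod)
qed simp

lemma cyc_offset_exists:
  fixes i j n :: nat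
  assumes "i < n" "j < n"
  shows "\<exists>k<n. j = (i + k) mod n"
proof (cases "i \<le> j")
  case True
  then show ?thesis using assms by (intro exI[of _ "j - i"]) auto
next
  case False
  then have "(i + (j + n - i)) mod n = j" using assms by simp
  then show ?thesis using assms False by (intro exI[of _ "j + n - i"]) auto
qed

lemma cyc_offset_middle:
  assumes "i < n" "0 < k" "k < n - 1"
  shows "(i + k) mod n \<noteq> i" "(i + k) mod n \<noteq> cyc_pred n i"
  using cyc_offset_eq_iff[of k n 0 i] cyc_offset_eq_iff[of k n "n - 1" i] cyc_offset_pred[of i n] assms by auto

lemma bij_cyc_succ: "bij_betw (cyc_succ n) {0..<n} {0..<n}"
  by (rule bij_betw_byWitness[where f' = "cyc_pred n"]) (auto simp: cyc_succ_lt cyc_pred_lt)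

lemma cyclic_mono_imp_const:
  fixes t :: "nat \<Rightarrow> 'a::ordered_cancel_comm_monoid_add"
  assumes mono: "\<forall>j<n. t j \<le> t (cyc_succ n j)" and i: "i < n"
  shows "t (cyc_succ n i) = t i"
proof (rule ccontr)
  assume "t (cyc_succ n i) \<noteq> t i"
  then have "(\<Sum>j<n. t j) < (\<Sum>j<n. t (cyc_succ n j))"
    using mono i by (intro sum_strict_mono_ex1) (auto intro!: bexI[of _ i] simp: order.strict_iff_order)
  also have "\<dots> = (\<Sum>j<n. t j)"
    using sum.reindex_bij_betw[OF bij_cyc_succ, of t n] by (simp add: atLeast0LessThan)
  finally show False by simp
qed

lemma compare_default_eq:
  fixes x y :: "'a::linorder"
  shows "compare default x y = (if x < y then Less else if x = y then Equiv else Greater)"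
  by (cases "compare default x y") auto

lemma compare_nth_sorted:
  assumes "sorted_wrt (<) xs" "a < length xs" "b < length xs"
  shows "compare default (xs ! a) (xs ! b) = compare default a b"
  using assms sorted_wrt_nth_less[OF assms(1), of a b] sorted_wrt_nth_less[OF assms(1), of b a]
  by (cases a b rule: linorder_cases) (auto simp: compare_default_eq)


section \<open>Schedules and their update labellings\<close>

definition block_index :: "nat set list \<Rightarrow> nat \<Rightarrow> nat" where
  "block_index \<Delta> i = (THE k. k < length \<Delta> \<and> i \<in> \<Delta> ! k)"

lemma schedule_block_lt:
  assumes "\<Delta> \<in> schedules n" "k < length \<Delta>" "i \<in> \<Delta> ! k"
  shows "i < n"
  using assms by (auto simp: schedules_def)

lemma block_index_eqI:
  assumes \<Delta>: "\<Delta> \<in> schedules n" and k: "k < length \<Delta>" "i \<in> \<Delta> ! k"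
  shows "block_index \<Delta> i = k"
  unfolding block_index_def
proof (rule the_equality)
  fix k' assume k': "k' < length \<Delta> \<and> i \<in> \<Delta> ! k'"
  have "\<Delta> ! a \<inter> \<Delta> ! b = {}" if "a < b" "b < length \<Delta>" for a b
    using \<Delta> that by (simp add: schedules_def)
  then show "k' = k"
    using k k' by (metis disjoint_iff linorder_neqE_nat)
qed (use k in simp)

lemma block_index:
  assumes \<Delta>: "\<Delta> \<in> schedules n" and i: "i < n"
  shows "block_index \<Delta> i < length \<Delta>" "i \<in> \<Delta> ! block_index \<Delta> i"
proof -
  have "i \<in> \<Union> (set \<Delta>)" using \<Delta> i by (simp add: schedules_def)
  then obtain k where "k < length \<Delta>" "i \<in> \<Delta> ! k" by (auto simp: in_set_conv_nth)
  then show "block_index \<Delta> i < length \<Delta>" "i \<in> \<Delta> ! block_index \<Delta> i"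
    using block_index_eqI[OF \<Delta>] by simp_all
qed

lemma sched_update_take_block:
  assumes \<Delta>: "\<Delta> \<in> schedules n" and k: "k \<le> length \<Delta>"
  shows "sched_update n (take k \<Delta>) x j =
    (if j < n \<and> block_index \<Delta> j < k then sched_update n (take (Suc (block_index \<Delta> j)) \<Delta>) x j else x j)"
  using k
proof (induction k)
  case 0
  then show ?case by (simp add: sched_update_def)
next
  case (Suc k)
  then have k: "k < length \<Delta>" by simp
  have step: "sched_update n (take (Suc k) \<Delta>) x = block_update n (\<Delta> ! k) (sched_update n (take k \<Delta>) x)"
    using k by (simp add: sched_update_def take_Suc_conv_app_nth)
  show ?case
  proof (cases "j \<in> \<Delta> ! k")
    case True
    then show ?thesis using block_index_eqI[OF \<Delta> k True] schedule_block_lt[OF \<Delta> k True] by simp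
  next
    case False
    then have "j < n \<Longrightarrow> block_index \<Delta> j \<noteq> k" using block_index(2)[OF \<Delta>] by metis
    then show ?thesis using Suc False step by (auto simp: block_update_def)
  qed
qed

lemma sched_update_outside:
  assumes "\<Delta> \<in> schedules n" "\<not> j < n"
  shows "sched_update n \<Delta> x j = x j"
  using sched_update_take_block[OF assms(1) order_refl, of x j] assms(2) by simp

lemma sched_update_take:
  assumes \<Delta>: "\<Delta> \<in> schedules n" and k: "k \<le> length \<Delta>" and j: "j < n"
  shows "sched_update n (take k \<Delta>) x j = (if block_index \<Delta> j < k then sched_update n \<Delta> x j else x j)"
  using sched_update_take_block[OF \<Delta> k] sched_update_take_block[OF \<Delta> order_refl] block_index(1)[OF \<Delta> j] j
  by simp

lemma sched_update_cell:
  assumes \<Delta>: "\<Delta> \<in> schedules n" and j: "j < n"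
  defines "earlier m \<equiv> block_index \<Delta> m < block_index \<Delta> j"
  shows "sched_update n \<Delta> x j = r162
    (if earlier (cyc_pred n j) then sched_update n \<Delta> x (cyc_pred n j) else x (cyc_pred n j)) (x j)
    (if earlier (cyc_succ n j) then sched_update n \<Delta> x (cyc_succ n j) else x (cyc_succ n j))"
proof -
  let ?k = "block_index \<Delta> j"
  let ?y = "sched_update n (take ?k \<Delta>) x"
  have n: "0 < n" using j by simp
  have k: "?k < length \<Delta>" "j \<in> \<Delta> ! ?k" using block_index[OF \<Delta> j] by auto
  have "sched_update n \<Delta> x j = sched_update n (take (Suc ?k) \<Delta>) x j"
    using sched_update_take_block[OF \<Delta> order_refl] j k by simp
  also have "\<dots> = f162 n ?y j"
    using k by (simp add: sched_update_def take_Suc_conv_app_nth block_update_def)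
  also have "\<dots> = r162 (?y (cyc_pred n j)) (?y j) (?y (cyc_succ n j))"
    using j by (simp add: f162_def cyc_pred_def cyc_succ_def)
  finally show ?thesis
    using sched_update_take[OF \<Delta> less_imp_le[OF k(1)]] j cyc_pred_lt[OF n] cyc_succ_lt[OF n]
    by (simp add: earlier_def)
qed


text \<open>The arc labels of the update digraph, one for each edge \<open>{i, i+1}\<close> of the cycle.\<close>

definition update_labelling :: "nat \<Rightarrow> nat set list \<Rightarrow> comp list" where
  "update_labelling n \<Delta> =
    map (\<lambda>i. compare default (block_index \<Delta> i) (block_index \<Delta> (cyc_succ n i))) [0..<n]"

text \<open>A neighbour updated in an earlier block contributes its new value, any other neighbour its old one.\<close>

definition labelled_update :: "nat \<Rightarrow> comp list \<Rightarrow> (nat \<Rightarrow> bool) \<Rightarrow> (nat \<Rightarrow> bool) \<Rightarrow> bool" where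
  "labelled_update n L x y \<longleftrightarrow> (\<forall>i<n. y i = r162
     (if L ! cyc_pred n i = Less then y (cyc_pred n i) else x (cyc_pred n i)) (x i)
     (if L ! i = Greater then y (cyc_succ n i) else x (cyc_succ n i)))"

lemma labelled_updateD:
  "labelled_update n L x y \<Longrightarrow> i < n \<Longrightarrow> y i = r162
     (if L ! cyc_pred n i = Less then y (cyc_pred n i) else x (cyc_pred n i)) (x i)
     (if L ! i = Greater then y (cyc_succ n i) else x (cyc_succ n i))"
  by (simp add: labelled_update_def)

lemma update_labelling_Less_pred:
  "i < n \<Longrightarrow> update_labelling n \<Delta> ! cyc_pred n i = Less \<longleftrightarrow>
    block_index \<Delta> (cyc_pred n i) < block_index \<Delta> i"
  by (simp add: update_labelling_def cyc_pred_lt)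

lemma update_labelling_Greater:
  "i < n \<Longrightarrow> update_labelling n \<Delta> ! i = Greater \<longleftrightarrow>
    block_index \<Delta> (cyc_succ n i) < block_index \<Delta> i"
  by (simp add: update_labelling_def)

lemma labelled_update_sched_update:
  "\<Delta> \<in> schedules n \<Longrightarrow> labelled_update n (update_labelling n \<Delta>) x (sched_update n \<Delta> x)"
  unfolding labelled_update_def
  using sched_update_cell update_labelling_Less_pred update_labelling_Greater by simp

lemma labelled_update_unique:
  assumes \<Delta>: "\<Delta> \<in> schedules n" and y: "labelled_update n (update_labelling n \<Delta>) x y"
  shows "i < n \<Longrightarrow> y i = sched_update n \<Delta> x i"
proof (induction "block_index \<Delta> i" arbitrary: i rule: less_induct)
  case (less i)
  have n: "0 < n" using less.prems by simp
  note eqs = labelled_updateD[OF y less.prems] labelled_updateD[OF labelled_update_sched_update[OF \<Delta>] less.prems]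
  show ?case
    using less.hyps[of "cyc_pred n i"] less.hyps[of "cyc_succ n i"] eqs
      update_labelling_Less_pred[OF less.prems] update_labelling_Greater[OF less.prems]
      cyc_pred_lt[OF n] cyc_succ_lt[OF n]
    by auto
qed

lemma dynamics_eq_iff:
  "dynamics n \<Delta>\<^sub>1 = dynamics n \<Delta>\<^sub>2 \<longleftrightarrow> (\<forall>x\<in>configs n. sched_update n \<Delta>\<^sub>1 x = sched_update n \<Delta>\<^sub>2 x)"
  unfolding dynamics_def by (auto simp: set_eq_iff)

lemma dynamics_eqI:
  assumes \<Delta>\<^sub>1: "\<Delta>\<^sub>1 \<in> schedules n" and \<Delta>\<^sub>2: "\<Delta>\<^sub>2 \<in> schedules n"
    and L: "\<And>x y. labelled_update n (update_labelling n \<Delta>\<^sub>1) x y \<Longrightarrow> labelled_update n (update_labelling n \<Delta>\<^sub>2) x y"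
  shows "dynamics n \<Delta>\<^sub>1 = dynamics n \<Delta>\<^sub>2"
  unfolding dynamics_eq_iff
proof (intro ballI ext)
  fix x j
  show "sched_update n \<Delta>\<^sub>1 x j = sched_update n \<Delta>\<^sub>2 x j"
    using labelled_update_unique[OF \<Delta>\<^sub>2 L[OF labelled_update_sched_update[OF \<Delta>\<^sub>1]]]
      sched_update_outside[OF \<Delta>\<^sub>1] sched_update_outside[OF \<Delta>\<^sub>2]
    by (cases "j < n") simp_all
qed


section \<open>Realizable labellings\<close>

definition realizable_labellings :: "nat \<Rightarrow> comp list set" where
  "realizable_labellings n = {L. length L = n \<and> (Less \<in> set L \<longleftrightarrow> Greater \<in> set L)}"

lemma update_labelling_realizable:
  assumes \<Delta>: "\<Delta> \<in> schedules n"
  shows "update_labelling n \<Delta> \<in> realizable_labellings n"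
proof -
  let ?L = "update_labelling n \<Delta>"
  have no_strict: "c \<notin> set ?L"
    if "\<forall>j<n. t j \<le> t (cyc_succ n j)"
      and "\<forall>j<n. ?L ! j = c \<longleftrightarrow> t j < t (cyc_succ n j)" for t :: "nat \<Rightarrow> int" and c
    using that cyclic_mono_imp_const[OF that(1)] by (auto simp: in_set_conv_nth update_labelling_def)
  have "Less \<notin> set ?L" if "Greater \<notin> set ?L"
    using that by (intro no_strict[of "\<lambda>j. int (block_index \<Delta> j)"])
      (auto simp: in_set_conv_nth update_labelling_def compare_default_eq split: if_splits)
  moreover have "Greater \<notin> set ?L" if "Less \<notin> set ?L"
    using that by (intro no_strict[of "\<lambda>j. - int (block_index \<Delta> j)"])
      (auto simp: in_set_conv_nth update_labelling_def compare_default_eq split: if_splits)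
  ultimately show ?thesis by (auto simp: realizable_labellings_def update_labelling_def)
qed

definition level_schedule :: "nat \<Rightarrow> (nat \<Rightarrow> 'a::linorder) \<Rightarrow> nat set list" where
  "level_schedule n t = map (\<lambda>v. {i. i < n \<and> t i = v}) (sorted_list_of_set (t ` {0..<n}))"

lemma level_schedule:
  fixes t :: "nat \<Rightarrow> 'a::linorder"
  shows "level_schedule n t \<in> schedules n"
    and "i < n \<Longrightarrow> j < n \<Longrightarrow> compare default (block_index (level_schedule n t) i)
      (block_index (level_schedule n t) j) = compare default (t i) (t j)"
proof -
  let ?vs = "sorted_list_of_set (t ` {0..<n})"
  have sorted_vs: "sorted_wrt (<) ?vs" by simp
  have nth_schedule: "level_schedule n t ! k = {i. i < n \<and> t i = ?vs ! k}" if "k < length ?vs" for k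
    using that by (simp add: level_schedule_def)
  show sched: "level_schedule n t \<in> schedules n"
    unfolding schedules_def
  proof (intro CollectI conjI allI impI)
    show "\<forall>B\<in>set (level_schedule n t). B \<noteq> {}"
      by (auto simp: level_schedule_def)
    show "\<Union> (set (level_schedule n t)) = {0..<n}"
      by (auto simp: level_schedule_def)
    fix a b assume ab: "a < b \<and> b < length (level_schedule n t)"
    then have "?vs ! a < ?vs ! b" using sorted_wrt_nth_less[OF sorted_vs] by (simp add: level_schedule_def)
    then show "level_schedule n t ! a \<inter> level_schedule n t ! b = {}"
      using nth_schedule ab by (auto simp: level_schedule_def)
  qed
  have position: "block_index (level_schedule n t) i < length ?vs \<and> ?vs ! block_index (level_schedule n t) i = t i"
    if "i < n" for i
    using block_index[OF sched that] nth_schedule by (auto simp: level_schedule_def)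
  show "compare default (block_index (level_schedule n t) i) (block_index (level_schedule n t) j) =
      compare default (t i) (t j)" if "i < n" "j < n"
    using compare_nth_sorted[OF sorted_vs] position[OF that(1)] position[OF that(2)] by metis
qed

text \<open>The weights of all entries of \<open>L\<close> sum to \<open>#Less * #Greater - #Greater * #Less = 0\<close>, so the
  prefix sums close up around the cycle.\<close>

definition labelling_weight :: "comp list \<Rightarrow> comp \<Rightarrow> int" where
  "labelling_weight L c =
    (case c of Less \<Rightarrow> int (count_list L Greater) | Equiv \<Rightarrow> 0 | Greater \<Rightarrow> - int (count_list L Less))"

definition labelling_potential :: "comp list \<Rightarrow> nat \<Rightarrow> int" where
  "labelling_potential L j = sum_list (map (labelling_weight L) (take j L))"

lemma sum_list_labelling_weight:
  "sum_list (map (labelling_weight L) xs) =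
    int (count_list L Greater) * int (count_list xs Less) - int (count_list L Less) * int (count_list xs Greater)"
  by (induction xs) (auto simp: labelling_weight_def algebra_simps split: comp.split)

lemma labelling_potential_cyc_succ:
  assumes j: "j < length L"
  shows "labelling_potential L (cyc_succ (length L) j) = labelling_potential L j + labelling_weight L (L ! j)"
proof -
  have "labelling_potential L (length L) = 0"
    by (simp add: labelling_potential_def sum_list_labelling_weight)
  then have "labelling_potential L (cyc_succ (length L) j) = labelling_potential L (Suc j)"
    using j by (auto simp: cyc_succ_eq labelling_potential_def)
  then show ?thesis
    using j by (simp add: labelling_potential_def take_Suc_conv_app_nth)
qed

lemma compare_labelling_potential:
  assumes L: "L \<in> realizable_labellings n" and j: "j < n"
  shows "compare default (labelling_potential L j) (labelling_potential L (cyc_succ n j)) = L ! j"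
proof -
  have n: "length L = n" and balanced: "Less \<in> set L \<longleftrightarrow> Greater \<in> set L"
    using L by (simp_all add: realizable_labellings_def)
  have "L ! j \<in> set L" using n j by simp
  then have "Less \<in> set L \<and> Greater \<in> set L" if "L ! j \<noteq> Equiv"
    using balanced that by (metis comp.exhaust)
  then have "L ! j \<noteq> Equiv \<Longrightarrow> 0 < count_list L Less \<and> 0 < count_list L Greater"
    by (metis count_list_0_iff gr0I)
  then show ?thesis
    using labelling_potential_cyc_succ[of j L] n j
    by (cases "L ! j") (auto simp: labelling_weight_def compare_default_eq)
qed

lemma update_labelling_level_schedule:
  assumes "L \<in> realizable_labellings n"
  shows "update_labelling n (level_schedule n (labelling_potential L)) = L"
proof (rule nth_equalityI)
  have n: "length L = n" using assms by (simp add: realizable_labellings_def)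
  then show "length (update_labelling n (level_schedule n (labelling_potential L))) = length L"
    by (simp add: update_labelling_def)
  fix j assume "j < length (update_labelling n (level_schedule n (labelling_potential L)))"
  then have j: "j < n" by (simp add: update_labelling_def)
  then show "update_labelling n (level_schedule n (labelling_potential L)) ! j = L ! j"
    using level_schedule(2)[of j n "cyc_succ n j" "labelling_potential L"] cyc_succ_lt[of n j] compare_labelling_potential[OF assms j] j
    by (simp add: update_labelling_def)
qed

lemma UNIV_comp: "(UNIV :: comp set) = {Less, Equiv, Greater}"
  using comp.exhaust by auto

lemma finite_realizable_labellings: "finite (realizable_labellings n)"
proof (rule finite_subset[OF _ finite_lists_length_eq[of UNIV n]])
  show "finite (UNIV :: comp set)" by (simp add: UNIV_comp)
qed (auto simp: realizable_labellings_def)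

lemma card_lists_containing:
  assumes "a \<noteq> b"
  shows "card {L. set L \<subseteq> {a, b} \<and> length L = n \<and> a \<in> set L} + 1 = 2 ^ n"
proof -
  let ?A = "{L. set L \<subseteq> {a, b} \<and> length L = n \<and> a \<in> set L}"
  let ?B = "{L. set L \<subseteq> {b} \<and> length L = n}"
  have "{L. set L \<subseteq> {a, b} \<and> length L = n} = ?A \<union> ?B" by auto
  moreover have "?A \<inter> ?B = {}" using assms by auto
  moreover have "finite ?A" "finite ?B"
    by (auto intro: finite_subset[OF _ finite_lists_length_eq[of "{a, b}" n]])
  ultimately have "card {L. set L \<subseteq> {a, b} \<and> length L = n} = card ?A + card ?B"
    by (simp add: card_Un_disjoint)
  then show ?thesis using assms by (simp add: card_lists_length_eq numeral_2_eq_2)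
qed

lemma card_realizable_labellings: "card (realizable_labellings n) + 2 * 2 ^ n = 3 ^ n + 2"
proof -
  let ?A = "{L. set L \<subseteq> {Less, Equiv} \<and> length L = n \<and> Less \<in> set L}"
  let ?B = "{L. set L \<subseteq> {Greater, Equiv} \<and> length L = n \<and> Greater \<in> set L}"
  have "{L. set L \<subseteq> UNIV \<and> length L = n} = realizable_labellings n \<union> (?A \<union> ?B)"
    by (auto simp: realizable_labellings_def) (metis comp.exhaust)+
  moreover have "finite ?A" "finite ?B"
    by (auto intro: finite_subset[OF _ finite_lists_length_eq[of UNIV n]] simp: UNIV_comp)
  moreover have "realizable_labellings n \<inter> (?A \<union> ?B) = {}" "?A \<inter> ?B = {}"
    by (auto simp: realizable_labellings_def)
  ultimately have "3 ^ n = card (realizable_labellings n) + (card ?A + card ?B)"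
    using card_lists_length_eq[of "UNIV :: comp set" n]
    by (simp add: card_Un_disjoint finite_realizable_labellings UNIV_comp numeral_3_eq_3)
  moreover have "card ?A + 1 = 2 ^ n" "card ?B + 1 = 2 ^ n"
    using card_lists_containing[of Less Equiv n] card_lists_containing[of Greater Equiv n] by simp_all
  ultimately show ?thesis by simp
qed


section \<open>Collisions\<close>

lemma labelled_update_Greater_run:
  assumes y: "labelled_update n L x y" and n: "0 < n"
    and run: "\<forall>k<m. L ! ((a + k) mod n) = Greater" and start: "y (a mod n)"
  shows "y ((a + m) mod n)"
  using run
proof (induction m)
  case 0
  show ?case using start by simp
next
  case (Suc m)
  let ?j = "(a + m) mod n"
  have "y ?j" "L ! ?j = Greater" using Suc by simp_all
  then have "y (cyc_succ n ?j)"
    using labelled_updateD[OF y, of ?j] n by (simp add: r162_def)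
  then show ?case by (simp add: cyc_succ_mod)
qed

definition collision_labelling :: "nat \<Rightarrow> nat \<Rightarrow> comp \<Rightarrow> comp list" where
  "collision_labelling n i c =
    map (\<lambda>j. if j = cyc_pred n i then Less else if j = i then c else Greater) [0..<n]"

lemma nth_collision_labelling:
  "j < n \<Longrightarrow> collision_labelling n i c ! j =
    (if j = cyc_pred n i then Less else if j = i then c else Greater)"
  by (simp add: collision_labelling_def)

text \<open>A 1 entering cell \<open>i+1\<close> from the right runs down the decreasing arc to cell \<open>i-1\<close>; then cell \<open>i\<close>
  holds a 1 and its new value is the old value of cell \<open>i+1\<close>, so cell \<open>i+1\<close> copies its right
  input whether it reads the old or the new value of cell \<open>i\<close>.\<close>

lemma collision_labelling_right_input:
  assumes n: "3 \<le> n" and i: "i < n"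
    and y: "labelled_update n (collision_labelling n i Less) x y"
    and right: "y (cyc_succ n (cyc_succ n i))"
  shows "x i \<and> y i = x (cyc_succ n i)"
proof -
  let ?L = "collision_labelling n i Less" and ?p = "cyc_pred n i"
  have n0: "0 < n" using n by simp
  have p: "?p < n" "?p \<noteq> i" "cyc_succ n i \<noteq> ?p"
    using cyc_pred_lt[OF n0] cyc_pred_neq[of n i] cyc_succ_neq_pred[OF n i] n i by auto
  have "y (((i + 2) + (n - 3)) mod n)"
  proof (rule labelled_update_Greater_run[OF y n0])
    show "y ((i + 2) mod n)" using right by (simp add: cyc_succ_def mod_Suc_eq)
    show "\<forall>k<n - 3. ?L ! ((i + 2 + k) mod n) = Greater"
      using cyc_offset_middle[OF i, of "2 + _"] n by (auto simp: nth_collision_labelling add.assoc)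
  qed
  moreover have "i + 2 + (n - 3) = i + (n - 1)" using n by simp
  ultimately have "y ?p" using cyc_offset_pred[OF i] by (simp only:)
  then show ?thesis
    using labelled_updateD[OF y p(1)] labelled_updateD[OF y i] p i
    by (auto simp: nth_collision_labelling r162_def)
qed

lemma labelled_update_collision:
  assumes n: "3 \<le> n" and i: "i < n"
    and y: "labelled_update n (collision_labelling n i Less) x y"
  shows "labelled_update n (collision_labelling n i Equiv) x y"
  unfolding labelled_update_def
proof (intro allI impI)
  let ?L' = "collision_labelling n i Equiv" and ?p = "cyc_pred n i" and ?s = "cyc_succ n i"
  have n0: "0 < n" using n by simp
  have p: "?p < n" "?p \<noteq> i" "?s \<noteq> ?p" using cyc_pred_lt[OF n0] cyc_pred_neq[of n i] cyc_succ_neq_pred[OF n i] n i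
    by auto
  have s: "?s < n" "?s \<noteq> i" using cyc_succ_lt[OF n0] cyc_succ_neq[of n i] n i by auto
  fix m assume m: "m < n"
  show "y m = r162 (if ?L' ! cyc_pred n m = Less then y (cyc_pred n m) else x (cyc_pred n m)) (x m)
      (if ?L' ! m = Greater then y (cyc_succ n m) else x (cyc_succ n m))"
  proof (cases "m = ?s")
    case False
    then have "cyc_pred n m \<noteq> i" using m by auto
    moreover have "cyc_pred n m = ?p \<longleftrightarrow> m = i" using m i by (metis cyc_succ_pred)
    ultimately show ?thesis
      using labelled_updateD[OF y m] m cyc_pred_lt[OF n0] by (auto simp: nth_collision_labelling)
  next
    case True
    let ?c = "y (cyc_succ n ?s)"
    have ys: "y ?s = r162 (y i) (x ?s) ?c"
      using labelled_updateD[OF y s(1)] i s p by (simp add: nth_collision_labelling)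
    have "x i \<and> y i = x ?s" if ?c
      using collision_labelling_right_input[OF n i y that] .
    then show ?thesis
      using True ys p s i by (auto simp: nth_collision_labelling r162_def)
  qed
qed

definition collisions :: "nat \<Rightarrow> comp list set" where
  "collisions n = (\<lambda>i. collision_labelling n i Equiv) ` {..<n}"

lemma collision_labelling_realizable:
  assumes n: "3 \<le> n" and i: "i < n"
  shows "collision_labelling n i c \<in> realizable_labellings n"
proof -
  let ?L = "collision_labelling n i c" and ?p = "cyc_pred n i" and ?s = "cyc_succ n i"
  have n0: "0 < n" using n by simp
  have len: "length ?L = n" by (simp add: collision_labelling_def)
  have "?L ! ?p = Less" using cyc_pred_lt[OF n0] by (simp add: nth_collision_labelling)
  then have "Less \<in> set ?L" using nth_mem[of ?p ?L] len cyc_pred_lt[OF n0] by simp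
  have "?L ! ?s = Greater"
    using cyc_succ_lt[OF n0] cyc_succ_neq[of n i] cyc_succ_neq_pred[OF n i] n i
    by (simp add: nth_collision_labelling)
  then have "Greater \<in> set ?L" using nth_mem[of ?s ?L] len cyc_succ_lt[OF n0] by simp
  with \<open>Less \<in> set ?L\<close> len show ?thesis by (simp add: realizable_labellings_def)
qed

lemma nth_collision_labelling_Equiv_iff:
  assumes "2 \<le> n" "i < n" "j < n"
  shows "collision_labelling n i c ! j = Equiv \<longleftrightarrow> c = Equiv \<and> j = i"
  using assms cyc_pred_neq[of n i] by (auto simp: nth_collision_labelling)

lemma collision_labelling_Less_not_collision:
  assumes "3 \<le> n" "i < n"
  shows "collision_labelling n i Less \<notin> collisions n"
proof
  assume "collision_labelling n i Less \<in> collisions n"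
  then obtain j where j: "j < n" "collision_labelling n j Equiv = collision_labelling n i Less"
    by (auto simp: collisions_def)
  then have "collision_labelling n i Less ! j = Equiv"
    using nth_collision_labelling_Equiv_iff[of n j j Equiv] assms by simp
  then show False using nth_collision_labelling_Equiv_iff[of n i j Less] assms j by simp
qed

lemma card_collisions:
  assumes "2 \<le> n"
  shows "card (collisions n) = n"
proof -
  have "inj_on (\<lambda>i. collision_labelling n i Equiv) {..<n}"
  proof (rule inj_onI)
    fix i j assume i: "i \<in> {..<n}" and j: "j \<in> {..<n}"
      and eq: "collision_labelling n i Equiv = collision_labelling n j Equiv"
    have "collision_labelling n j Equiv ! i = Equiv"
      using nth_collision_labelling_Equiv_iff[of n i i Equiv] eq assms i by simp
    then show "i = j" using nth_collision_labelling_Equiv_iff[of n j i Equiv] assms i j by simp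
  qed
  then show ?thesis by (simp add: collisions_def card_image)
qed


section \<open>Separating distinct labellings\<close>

definition separable :: "nat \<Rightarrow> comp list \<Rightarrow> comp list \<Rightarrow> bool" where
  "separable n L\<^sub>1 L\<^sub>2 \<longleftrightarrow> (\<exists>x\<in>configs n. \<exists>i<n. \<forall>y\<^sub>1 y\<^sub>2.
     labelled_update n L\<^sub>1 x y\<^sub>1 \<longrightarrow> labelled_update n L\<^sub>2 x y\<^sub>2 \<longrightarrow> y\<^sub>1 i \<noteq> y\<^sub>2 i)"

lemma separable_sym: "separable n L\<^sub>1 L\<^sub>2 \<Longrightarrow> separable n L\<^sub>2 L\<^sub>1"
  unfolding separable_def by metis

lemma dynamics_neqI:
  assumes "\<Delta>\<^sub>1 \<in> schedules n" "\<Delta>\<^sub>2 \<in> schedules n"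
    and "separable n (update_labelling n \<Delta>\<^sub>1) (update_labelling n \<Delta>\<^sub>2)"
  shows "dynamics n \<Delta>\<^sub>1 \<noteq> dynamics n \<Delta>\<^sub>2"
  using assms labelled_update_sched_update unfolding separable_def dynamics_eq_iff by metis

definition single_zero :: "nat \<Rightarrow> nat \<Rightarrow> nat \<Rightarrow> bool" where
  "single_zero n i j \<longleftrightarrow> j < n \<and> j \<noteq> i"

lemma single_zero_configs: "single_zero n i \<in> configs n"
  by (simp add: single_zero_def configs_def)

lemma separable_Greater:
  assumes n: "2 \<le> n" and i: "i < n" and L\<^sub>1: "L\<^sub>1 ! i = Greater" and L\<^sub>2: "L\<^sub>2 ! i \<noteq> Greater"
  shows "separable n L\<^sub>1 L\<^sub>2"
  unfolding separable_def
proof (intro bexI[OF _ single_zero_configs] exI[of _ i] conjI allI impI i)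
  fix y\<^sub>1 y\<^sub>2
  assume y\<^sub>1: "labelled_update n L\<^sub>1 (single_zero n i) y\<^sub>1" and y\<^sub>2: "labelled_update n L\<^sub>2 (single_zero n i) y\<^sub>2"
  have s: "cyc_succ n i < n" "cyc_succ n i \<noteq> i" using cyc_succ_lt[of n i] cyc_succ_neq[OF n i] i by auto
  have "\<not> y\<^sub>1 (cyc_succ n i)"
    using labelled_updateD[OF y\<^sub>1 s(1)] L\<^sub>1 i s by (simp add: single_zero_def r162_def)
  then have "\<not> y\<^sub>1 i"
    using labelled_updateD[OF y\<^sub>1 i] L\<^sub>1 by (simp add: r162_def)
  moreover have "y\<^sub>2 i"
    using labelled_updateD[OF y\<^sub>2 i] L\<^sub>2 s by (simp add: single_zero_def r162_def)
  ultimately show "y\<^sub>1 i \<noteq> y\<^sub>2 i" by simp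
qed

definition right_input :: "nat \<Rightarrow> comp list \<Rightarrow> (nat \<Rightarrow> bool) \<Rightarrow> (nat \<Rightarrow> bool) \<Rightarrow> nat \<Rightarrow> bool" where
  "right_input n L x y m \<longleftrightarrow> (if L ! m = Greater then y (cyc_succ n m) else x (cyc_succ n m))"

lemma single_zero_right_input_run:
  assumes y: "labelled_update n L (single_zero n i) y" and n: "3 \<le> n" and i: "i < n"
    and k: "k \<le> n - 2" and run: "\<forall>l<k. L ! ((i + 1 + l) mod n) = Greater"
  shows "right_input n L (single_zero n i) y (cyc_succ n i) =
    right_input n L (single_zero n i) y ((i + 1 + k) mod n)"
  using k run
proof (induction k)
  case 0
  then show ?case by (simp add: cyc_succ_def)
next
  case (Suc k)
  let ?m = "(i + 1 + k) mod n"
  have n0: "0 < n" using n by simp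
  have "?m \<noteq> i" using cyc_offset_middle(1)[OF i, of "1 + k"] Suc.prems(1) by (simp add: add.assoc)
  moreover have "cyc_succ n ?m \<noteq> i"
    using cyc_offset_eq_iff[of "2 + k" n 0 i] Suc.prems(1) i by (simp add: cyc_succ_mod add.assoc)
  moreover have "L ! ?m = Greater" using Suc.prems(2) by simp
  ultimately have "right_input n L (single_zero n i) y ?m = right_input n L (single_zero n i) y (cyc_succ n ?m)"
    using labelled_updateD[OF y cyc_succ_lt[OF n0, of ?m]]
    by (simp add: single_zero_def r162_def right_input_def n0)
  then show ?case using Suc by (simp add: cyc_succ_mod)
qed

lemma single_zero_right_input_succ:
  assumes y: "labelled_update n L (single_zero n i) y" and n: "3 \<le> n" and i: "i < n" and y_i: "y i"
    and escape: "L ! cyc_pred n i = Greater \<or> (\<exists>j<n. j \<noteq> i \<and> j \<noteq> cyc_pred n i \<and> L ! j \<noteq> Greater)"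
  shows "right_input n L (single_zero n i) y (cyc_succ n i)"
proof (cases "\<exists>k. k \<le> n - 3 \<and> L ! ((i + 1 + k) mod n) \<noteq> Greater")
  case True
  then obtain k where k: "k \<le> n - 3" "L ! ((i + 1 + k) mod n) \<noteq> Greater"
    and below: "\<forall>l<k. \<not> (l \<le> n - 3 \<and> L ! ((i + 1 + l) mod n) \<noteq> Greater)"
    using exists_least_iff[THEN iffD1, OF True] by blast
  have "cyc_succ n ((i + 1 + k) mod n) \<noteq> i"
    using cyc_offset_eq_iff[of "2 + k" n 0 i] k n i by (simp add: cyc_succ_mod add.assoc)
  then have "right_input n L (single_zero n i) y ((i + 1 + k) mod n)"
    using k n by (simp add: right_input_def single_zero_def cyc_succ_lt)
  moreover have "\<forall>l<k. L ! ((i + 1 + l) mod n) = Greater"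
    using below k(1) by auto
  moreover have "k \<le> n - 2" using k(1) by simp
  ultimately show ?thesis using single_zero_right_input_run[OF y n i, of k] by simp
next
  case False
  let ?p = "cyc_pred n i"
  have "L ! ?p = Greater"
  proof (rule ccontr)
    assume "L ! ?p \<noteq> Greater"
    then obtain j where j: "j < n" "j \<noteq> i" "j \<noteq> ?p" "L ! j \<noteq> Greater"
      using escape by blast
    obtain k where k: "k < n" "j = (i + k) mod n" using cyc_offset_exists[OF i j(1)] by blast
    have "k \<noteq> 0" using i j k by (metis add_0_right mod_less)
    moreover have "k \<noteq> n - 1" using j k cyc_offset_pred[OF i] by auto
    ultimately have "k - 1 \<le> n - 3" "i + 1 + (k - 1) = i + k" using k by auto
    then show False using False j k by auto
  qed
  moreover have "right_input n L (single_zero n i) y (cyc_succ n i) = right_input n L (single_zero n i) y ?p"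
  proof -
    have "right_input n L (single_zero n i) y (cyc_succ n i) =
        right_input n L (single_zero n i) y ((i + 1 + (n - 2)) mod n)"
      using single_zero_right_input_run[OF y n i, of "n - 2"] False by auto
    moreover have "i + 1 + (n - 2) = i + (n - 1)" using n by simp
    ultimately show ?thesis using cyc_offset_pred[OF i] by (simp only:)
  qed
  ultimately show ?thesis using y_i i by (simp add: right_input_def)
qed

text \<open>Under \<open>L\<^sub>2\<close> cell \<open>i+1\<close> reads the old 0 of cell \<open>i\<close>; under \<open>L\<^sub>1\<close> it reads the new value 1 and
  copies its right input, which \<open>escape\<close> forces to be 1.\<close>

lemma separable_Less_Equiv:
  assumes n: "3 \<le> n" and i: "i < n" and L\<^sub>1: "L\<^sub>1 ! i = Less" and L\<^sub>2: "L\<^sub>2 ! i = Equiv"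
    and escape: "L\<^sub>1 ! cyc_pred n i = Greater \<or> (\<exists>j<n. j \<noteq> i \<and> j \<noteq> cyc_pred n i \<and> L\<^sub>1 ! j \<noteq> Greater)"
  shows "separable n L\<^sub>1 L\<^sub>2"
  unfolding separable_def
proof (intro bexI[OF _ single_zero_configs] exI[of _ "cyc_succ n i"] conjI allI impI)
  let ?x = "single_zero n i" and ?s = "cyc_succ n i"
  have n0: "0 < n" using n by simp
  show s: "?s < n" using cyc_succ_lt[OF n0] .
  have s_ne: "?s \<noteq> i" using cyc_succ_neq[of n i] n i by simp
  fix y\<^sub>1 y\<^sub>2
  assume y\<^sub>1: "labelled_update n L\<^sub>1 ?x y\<^sub>1" and y\<^sub>2: "labelled_update n L\<^sub>2 ?x y\<^sub>2"
  have "y\<^sub>1 i"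
    using labelled_updateD[OF y\<^sub>1 i] L\<^sub>1 s s_ne by (simp add: single_zero_def r162_def)
  then have "y\<^sub>1 ?s"
    using labelled_updateD[OF y\<^sub>1 s] single_zero_right_input_succ[OF y\<^sub>1 n i _ escape] L\<^sub>1 i s s_ne
    by (simp add: single_zero_def r162_def right_input_def)
  moreover have "\<not> y\<^sub>2 ?s"
    using labelled_updateD[OF y\<^sub>2 s] L\<^sub>2 i s s_ne by (simp add: single_zero_def r162_def)
  ultimately show "y\<^sub>1 ?s \<noteq> y\<^sub>2 ?s" by simp
qed

lemma separable_Less_Equiv_realizable:
  assumes n: "3 \<le> n" and i: "i < n"
    and L\<^sub>2: "L\<^sub>2 \<in> realizable_labellings n" "L\<^sub>2 \<notin> collisions n"
    and L\<^sub>1_i: "L\<^sub>1 ! i = Less" and L\<^sub>2_i: "L\<^sub>2 ! i = Equiv"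
    and same_Greater: "\<forall>j<n. L\<^sub>1 ! j = Greater \<longleftrightarrow> L\<^sub>2 ! j = Greater"
  shows "separable n L\<^sub>1 L\<^sub>2"
proof (cases "L\<^sub>1 ! cyc_pred n i = Greater \<or> (\<exists>j<n. j \<noteq> i \<and> j \<noteq> cyc_pred n i \<and> L\<^sub>1 ! j \<noteq> Greater)")
  case True
  then show ?thesis using separable_Less_Equiv[OF n i L\<^sub>1_i L\<^sub>2_i] by blast
next
  case False
  let ?p = "cyc_pred n i" and ?s = "cyc_succ n i"
  have n0: "0 < n" using n by simp
  have len: "length L\<^sub>2 = n" using L\<^sub>2(1) by (simp add: realizable_labellings_def)
  have p: "?p < n" "L\<^sub>2 ! ?p \<noteq> Greater" using False same_Greater cyc_pred_lt[OF n0] by auto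
  have others: "L\<^sub>2 ! j = Greater" if "j < n" "j \<noteq> i" "j \<noteq> ?p" for j
    using False same_Greater that by auto
  have "L\<^sub>2 ! ?s = Greater"
    using others[of ?s] cyc_succ_lt[OF n0] cyc_succ_neq[of n i] cyc_succ_neq_pred[OF n i] n i by simp
  then have "Greater \<in> set L\<^sub>2" using nth_mem[of ?s L\<^sub>2] len cyc_succ_lt[OF n0] by simp
  then have "Less \<in> set L\<^sub>2" using L\<^sub>2(1) by (simp add: realizable_labellings_def)
  then obtain j where j: "j < n" "L\<^sub>2 ! j = Less" using len by (auto simp: in_set_conv_nth)
  then have "j = ?p" using others[of j] L\<^sub>2_i by (cases "j = i") auto
  then have "L\<^sub>2 ! ?p = Less" using j by simp
  then have "L\<^sub>2 = collision_labelling n i Equiv"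
    using others L\<^sub>2_i len by (intro nth_equalityI) (auto simp: nth_collision_labelling collision_labelling_def)
  with L\<^sub>2(2) i show ?thesis by (simp add: collisions_def)
qed

lemma separable_realizable:
  assumes n: "3 \<le> n"
    and L\<^sub>1: "L\<^sub>1 \<in> realizable_labellings n - collisions n"
    and L\<^sub>2: "L\<^sub>2 \<in> realizable_labellings n - collisions n"
    and ne: "L\<^sub>1 \<noteq> L\<^sub>2"
  shows "separable n L\<^sub>1 L\<^sub>2"
proof (cases "\<exists>i<n. (L\<^sub>1 ! i = Greater) \<noteq> (L\<^sub>2 ! i = Greater)")
  case True
  then obtain i where i: "i < n" "(L\<^sub>1 ! i = Greater) \<noteq> (L\<^sub>2 ! i = Greater)" by blast
  have n2: "2 \<le> n" using n by simp
  show ?thesis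
  proof (cases "L\<^sub>1 ! i = Greater")
    case True
    then show ?thesis using separable_Greater[OF n2 i(1)] i(2) by simp
  next
    case False
    then have "separable n L\<^sub>2 L\<^sub>1" using separable_Greater[OF n2 i(1)] i(2) by simp
    then show ?thesis by (rule separable_sym)
  qed
next
  case False
  then have same_Greater: "\<forall>j<n. L\<^sub>1 ! j = Greater \<longleftrightarrow> L\<^sub>2 ! j = Greater" by blast
  have "length L\<^sub>1 = n" "length L\<^sub>2 = n" using L\<^sub>1 L\<^sub>2 by (simp_all add: realizable_labellings_def)
  then obtain i where i: "i < n" "L\<^sub>1 ! i \<noteq> L\<^sub>2 ! i" using ne nth_equalityI by metis
  then consider "L\<^sub>1 ! i = Less" "L\<^sub>2 ! i = Equiv" | "L\<^sub>1 ! i = Equiv" "L\<^sub>2 ! i = Less"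
    using same_Greater by (cases "L\<^sub>1 ! i"; cases "L\<^sub>2 ! i") auto
  then show ?thesis
  proof cases
    case 1
    then show ?thesis using separable_Less_Equiv_realizable[OF n i(1)] L\<^sub>2 same_Greater by blast
  next
    case 2
    then have "separable n L\<^sub>2 L\<^sub>1"
      using separable_Less_Equiv_realizable[OF n i(1), of L\<^sub>1 L\<^sub>2] L\<^sub>1 same_Greater by auto
    then show ?thesis by (rule separable_sym)
  qed
qed


section \<open>Counting the dynamics\<close>

definition labelling_dynamics :: "nat \<Rightarrow> comp list \<Rightarrow> ((nat \<Rightarrow> bool) \<times> (nat \<Rightarrow> bool)) set" where
  "labelling_dynamics n L = dynamics n (level_schedule n (labelling_potential L))"

lemma dynamics_eq_labelling_dynamics:
  assumes \<Delta>: "\<Delta> \<in> schedules n"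
  shows "dynamics n \<Delta> = labelling_dynamics n (update_labelling n \<Delta>)"
  unfolding labelling_dynamics_def
  using update_labelling_level_schedule[OF update_labelling_realizable[OF \<Delta>]]
  by (intro dynamics_eqI[OF \<Delta> level_schedule(1)]) simp

lemma labelling_dynamics_collision:
  assumes "3 \<le> n" "i < n"
  shows "labelling_dynamics n (collision_labelling n i Equiv) = labelling_dynamics n (collision_labelling n i Less)"
  unfolding labelling_dynamics_def
  using update_labelling_level_schedule[OF collision_labelling_realizable[OF assms]]
    labelled_update_collision[OF assms]
  by (intro dynamics_eqI[OF level_schedule(1) level_schedule(1), symmetric]) simp

lemma all_dynamics_eq:
  assumes n: "3 \<le> n"
  shows "all_dynamics n = labelling_dynamics n ` (realizable_labellings n - collisions n)"
proof
  show "all_dynamics n \<subseteq> labelling_dynamics n ` (realizable_labellings n - collisions n)"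
  proof
    fix d assume "d \<in> all_dynamics n"
    then obtain \<Delta> where \<Delta>: "\<Delta> \<in> schedules n" and d: "d = labelling_dynamics n (update_labelling n \<Delta>)"
      by (auto simp: all_dynamics_def dynamics_eq_labelling_dynamics)
    show "d \<in> labelling_dynamics n ` (realizable_labellings n - collisions n)"
    proof (cases "update_labelling n \<Delta> \<in> collisions n")
      case True
      then obtain i where i: "i < n" "update_labelling n \<Delta> = collision_labelling n i Equiv"
        by (auto simp: collisions_def)
      then show ?thesis
        using d labelling_dynamics_collision[OF n i(1)] collision_labelling_realizable[OF n i(1)]
          collision_labelling_Less_not_collision[OF n i(1)]
        by auto
    next
      case False
      then show ?thesis using d update_labelling_realizable[OF \<Delta>] by auto
    qed
  qed
  show "labelling_dynamics n ` (realizable_labellings n - collisions n) \<subseteq> all_dynamics n"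
    using level_schedule(1) by (auto simp: labelling_dynamics_def all_dynamics_def)
qed

lemma inj_on_labelling_dynamics:
  assumes n: "3 \<le> n"
  shows "inj_on (labelling_dynamics n) (realizable_labellings n - collisions n)"
proof (rule inj_onI, rule ccontr)
  fix L\<^sub>1 L\<^sub>2
  assume L\<^sub>1: "L\<^sub>1 \<in> realizable_labellings n - collisions n" and L\<^sub>2: "L\<^sub>2 \<in> realizable_labellings n - collisions n"
    and eq: "labelling_dynamics n L\<^sub>1 = labelling_dynamics n L\<^sub>2" and ne: "L\<^sub>1 \<noteq> L\<^sub>2"
  have "separable n (update_labelling n (level_schedule n (labelling_potential L\<^sub>1)))
      (update_labelling n (level_schedule n (labelling_potential L\<^sub>2)))"
    using separable_realizable[OF n L\<^sub>1 L\<^sub>2 ne] L\<^sub>1 L\<^sub>2 by (simp add: update_labelling_level_schedule)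
  then show False
    using dynamics_neqI[OF level_schedule(1) level_schedule(1), of n "labelling_potential L\<^sub>1" "labelling_potential L\<^sub>2"] eq
    by (simp add: labelling_dynamics_def)
qed

lemma card_all_dynamics:
  assumes n: "3 \<le> n"
  shows "card (all_dynamics n) + n + 2 * 2 ^ n = 3 ^ n + 2"
proof -
  have sub: "collisions n \<subseteq> realizable_labellings n"
    using collision_labelling_realizable[OF n] by (auto simp: collisions_def)
  have "card (realizable_labellings n - collisions n) + n = card (realizable_labellings n)"
    using card_Diff_subset[OF finite_subset[OF sub finite_realizable_labellings] sub]
      card_mono[OF finite_realizable_labellings sub] card_collisions[of n] n
    by simp
  then show ?thesis
    using all_dynamics_eq[OF n] card_image[OF inj_on_labelling_dynamics[OF n]] card_realizable_labellings[of n]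
    by simp
qed

theorem mainTheorem8:
  fixes n :: nat
  assumes "n \<ge> 3"
  shows "sensitivity n = (3 ^ n - 2 ^ (n + 1) - real n + 2) / (3 ^ n - 2 ^ (n + 1) + 2)"
proof -
  have "real (card (all_dynamics n)) + real n + 2 * 2 ^ n = 3 ^ n + 2"
    using arg_cong[OF card_all_dynamics[OF assms], of real] by simp
  then show ?thesis by (simp add: sensitivity_def algebra_simps)
qed

end
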